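(* The property $\mathrm{Split}(B_\Lambda,B_\Lambda)$ is hereditary: if a set of reals $X$ satisfies $\mathrm{Split}(B_\Lambda,B_\Lambda)$ and $Y\subseteq X$ is infinite, then $Y$ satisfies $\mathrm{Split}(B_\Lambda,B_\Lambda)$.
   Context: A set of reals is an infinite topological space homeomorphic to a subset of $\mathbb R$. A cover of a space $X$ is a family $\mathcal U$ of subsets of $X$ with $\bigcup\mathcal U=X$ such that $X\not\subseteq U$ for all $U\in\mathcal U$; it is a large cover if every $x\in X$ lies in infinitely many members of $\mathcal U$. $B_\Lambda$ is the collection of countable large covers of the space by Borel sets. A space satisfies $\mathrm{Split}(B_\Lambda,B_\Lambda)$ if every $\mathcal U\in B_\Lambda$ can be partitioned into two disjoint subfamilies each containing a subfamily belonging to $B_\Lambda$ (equivalently, each of which is itself a large cover). *)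

theory Defs
  imports "HOL-Analysis.Analysis"
begin

text \<open>Sets of reals are modelled as subsets of the real line with the subspace
topology. A subset of X is Borel (in X) iff it is the trace on X of a Borel set of reals.\<close>

definition borel_in :: "real set \<Rightarrow> real set \<Rightarrow> bool" where
  "borel_in X U \<longleftrightarrow> (\<exists>B. B \<in> sets (borel :: real measure) \<and> U = B \<inter> X)"

definition is_cover :: "real set \<Rightarrow> real set set \<Rightarrow> bool" where
  "is_cover X \<U> \<longleftrightarrow> (\<forall>U\<in>\<U>. U \<subseteq> X) \<and> \<Union>\<U> = X \<and> (\<forall>U\<in>\<U>. \<not> X \<subseteq> U)"

definition large_cover :: "real set \<Rightarrow> real set set \<Rightarrow> bool" where
  "large_cover X \<U> \<longleftrightarrow> is_cover X \<U> \<and> (\<forall>x\<in>X. infinite {U\<in>\<U>. x \<in> U})"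

definition B_Lambda :: "real set \<Rightarrow> real set set set" where
  "B_Lambda X = {\<U>. countable \<U> \<and> (\<forall>U\<in>\<U>. borel_in X U) \<and> large_cover X \<U>}"

definition Split_BL :: "real set \<Rightarrow> bool" where
  "Split_BL X \<longleftrightarrow> (\<forall>\<U>\<in>B_Lambda X. \<exists>\<V> \<W>. \<V> \<union> \<W> = \<U> \<and> \<V> \<inter> \<W> = {} \<and>
      (\<exists>\<V>'\<subseteq>\<V>. \<V>' \<in> B_Lambda X) \<and> (\<exists>\<W>'\<subseteq>\<W>. \<W>' \<in> B_Lambda X))"

end

theory Submission
  imports Defs
begin

text \<open>Given a countable large Borel cover \<open>\<U>\<close> of \<open>Y \<subseteq> X\<close>, pick Borel sets \<open>B U\<close> with
\<open>U = B U \<inter> Y\<close> and let \<open>Z\<close> be the Borel set of reals lying in infinitely many \<open>B U\<close>; it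
contains \<open>Y\<close>. The sets \<open>(B U \<union> - Z) \<inter> X\<close> then form a countable large Borel cover of \<open>X\<close>
whose traces on \<open>Y\<close> give back \<open>\<U>\<close>: points of \<open>X - Z\<close> lie in all of them. Splitting this
cover of \<open>X\<close> and pulling the two halves back along the traces splits \<open>\<U>\<close>.\<close>

lemma sets_infinitely_often:
  assumes "countable I" and "\<And>i. i \<in> I \<Longrightarrow> A i \<in> sets M"
  shows "{x \<in> space M. infinite {i \<in> I. x \<in> A i}} \<in> sets M"
proof -
  have "{x \<in> space M. infinite {i \<in> I. x \<in> A i}} = (\<Inter>F\<in>{F. finite F \<and> F \<subseteq> I}. \<Union>i\<in>I - F. A i)"
  proof (intro set_eqI iffI)
    fix x assume "x \<in> {x \<in> space M. infinite {i \<in> I. x \<in> A i}}"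
    then have "infinite {i \<in> I. x \<in> A i}"
      by simp
    show "x \<in> (\<Inter>F\<in>{F. finite F \<and> F \<subseteq> I}. \<Union>i\<in>I - F. A i)"
    proof (rule INT_I)
      fix F assume "F \<in> {F. finite F \<and> F \<subseteq> I}"
      then have "infinite ({i \<in> I. x \<in> A i} - F)"
        using \<open>infinite {i \<in> I. x \<in> A i}\<close> by simp
      then obtain i where "i \<in> {i \<in> I. x \<in> A i} - F"
        using infinite_imp_nonempty by blast
      then show "x \<in> (\<Union>i\<in>I - F. A i)"
        by blast
    qed
  next
    fix x assume x: "x \<in> (\<Inter>F\<in>{F. finite F \<and> F \<subseteq> I}. \<Union>i\<in>I - F. A i)"
    have "x \<in> (\<Union>i\<in>I. A i)"
      using x[THEN INT_D, of "{}"] by simp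
    then have "x \<in> space M"
      using assms(2) sets.sets_into_space by blast
    moreover have "infinite {i \<in> I. x \<in> A i}"
    proof
      assume "finite {i \<in> I. x \<in> A i}"
      then have "x \<in> (\<Union>i\<in>I - {i \<in> I. x \<in> A i}. A i)"
        using x[THEN INT_D, of "{i \<in> I. x \<in> A i}"] by blast
      then show False
        by blast
    qed
    ultimately show "x \<in> {x \<in> space M. infinite {i \<in> I. x \<in> A i}}"
      by simp
  qed
  also have "\<dots> \<in> sets M"
    using assms by (intro sets.countable_INT' sets.countable_UN'' countable_Collect_finite_subset) auto
  finally show ?thesis .
qed

lemma large_cover_iff:
  "large_cover X \<U> \<longleftrightarrow> (\<forall>U\<in>\<U>. U \<subseteq> X \<and> \<not> X \<subseteq> U) \<and> (\<forall>x\<in>X. infinite {U\<in>\<U>. x \<in> U})"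
  unfolding large_cover_def is_cover_def by (fastforce dest: infinite_imp_nonempty)

lemma B_Lambda_infinite:
  assumes "\<U> \<in> B_Lambda Y" and "Y \<noteq> {}"
  shows "infinite \<U>"
proof
  assume "finite \<U>"
  moreover obtain y where "y \<in> Y"
    using assms(2) by blast
  ultimately show False
    using assms(1) by (auto simp: B_Lambda_def large_cover_iff)
qed

lemma infinite_members_image:
  assumes "inj_on f \<U>" and "infinite {U \<in> \<U>. P U}" and "\<And>U. U \<in> \<U> \<Longrightarrow> P U \<Longrightarrow> x \<in> f U"
  shows "infinite {V \<in> f ` \<U>. x \<in> V}"
proof
  assume "finite {V \<in> f ` \<U>. x \<in> V}"
  moreover have "f ` {U \<in> \<U>. P U} \<subseteq> {V \<in> f ` \<U>. x \<in> V}"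
    using assms(3) by blast
  ultimately have "finite (f ` {U \<in> \<U>. P U})"
    by (rule finite_subset[rotated])
  then show False
    using assms(1,2) by (simp add: finite_image_iff inj_on_subset)
qed

lemma B_Lambda_representatives:
  assumes "\<U> \<in> B_Lambda Y"
  obtains B Z where "\<And>U. U \<in> \<U> \<Longrightarrow> B U \<in> sets borel \<and> U = B U \<inter> Y"
    and "Z = {x. infinite {U \<in> \<U>. x \<in> B U}}" and "Z \<in> sets borel" and "Y \<subseteq> Z"
proof -
  have "\<forall>U\<in>\<U>. \<exists>B. B \<in> sets borel \<and> U = B \<inter> Y"
    using assms by (simp add: B_Lambda_def borel_in_def)
  then obtain B where B: "\<And>U. U \<in> \<U> \<Longrightarrow> B U \<in> sets borel \<and> U = B U \<inter> Y"
    by metis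
  have "countable \<U>"
    using assms by (simp add: B_Lambda_def)
  then have "{x. infinite {U \<in> \<U>. x \<in> B U}} \<in> sets borel"
    using sets_infinitely_often[of \<U> B borel] B by simp
  moreover have "Y \<subseteq> {x. infinite {U \<in> \<U>. x \<in> B U}}"
  proof
    fix y assume "y \<in> Y"
    then have "infinite {U \<in> \<U>. y \<in> U}"
      using assms by (simp add: B_Lambda_def large_cover_iff)
    moreover have "{U \<in> \<U>. y \<in> U} \<subseteq> {U \<in> \<U>. y \<in> B U}"
      using B by blast
    ultimately show "y \<in> {x. infinite {U \<in> \<U>. x \<in> B U}}"
      using finite_subset by blast
  qed
  ultimately show thesis
    using B that by blast
qed

lemma B_Lambda_extend:
  assumes "\<U> \<in> B_Lambda Y" and "Y \<subseteq> X" and "Y \<noteq> {}"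
  obtains f where "\<And>U. U \<in> \<U> \<Longrightarrow> f U \<inter> Y = U" and "f ` \<U> \<in> B_Lambda X"
proof -
  have countable: "countable \<U>" and large: "large_cover Y \<U>"
    using assms(1) by (auto simp: B_Lambda_def)
  obtain B Z where B: "\<And>U. U \<in> \<U> \<Longrightarrow> B U \<in> sets borel \<and> U = B U \<inter> Y"
    and Z: "Z = {x. infinite {U \<in> \<U>. x \<in> B U}}" and "Z \<in> sets borel" and "Y \<subseteq> Z"
    using B_Lambda_representatives[OF assms(1)] by blast
  define f where "f U = (B U \<union> - Z) \<inter> X" for U
  have trace: "f U \<inter> Y = U" if "U \<in> \<U>" for U
    using B[OF that] \<open>Y \<subseteq> Z\<close> assms(2) unfolding f_def by blast
  then have "inj_on f \<U>"
    by (metis inj_onI)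
  have "infinite {V \<in> f ` \<U>. x \<in> V}" if "x \<in> X" for x
  proof (cases "x \<in> Z")
    case True
    then show ?thesis
      using \<open>inj_on f \<U>\<close> that Z by (intro infinite_members_image[of _ _ "\<lambda>U. x \<in> B U"]) (auto simp: f_def)
  next
    case False
    then show ?thesis
      using \<open>inj_on f \<U>\<close> B_Lambda_infinite[OF assms(1,3)] that
      by (intro infinite_members_image[of _ _ "\<lambda>_. True"]) (auto simp: f_def)
  qed
  moreover have "borel_in X (f U)" if "U \<in> \<U>" for U
  proof -
    have "B U \<union> - Z \<in> sets borel"
      using B[OF that] \<open>Z \<in> sets borel\<close> by auto
    then show ?thesis
      unfolding borel_in_def f_def by blast
  qed
  moreover have "\<not> X \<subseteq> f U" if "U \<in> \<U>" for U
  proof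
    assume "X \<subseteq> f U"
    then have "Y \<subseteq> U"
      using trace[OF that] assms(2) by blast
    then show False
      using large that by (simp add: large_cover_iff)
  qed
  ultimately have "f ` \<U> \<in> B_Lambda X"
    using countable by (auto simp: B_Lambda_def large_cover_iff f_def)
  with trace show thesis
    using that by blast
qed

lemma B_Lambda_pullback:
  assumes "\<U> \<in> B_Lambda Y" and "Y \<subseteq> X" and trace: "\<And>U. U \<in> \<U> \<Longrightarrow> f U \<inter> Y = U"
    and "\<A> \<subseteq> f ` \<U>" and "\<A> \<in> B_Lambda X"
  shows "{U \<in> \<U>. f U \<in> \<A>} \<in> B_Lambda Y"
proof -
  have "infinite {U \<in> \<U>. f U \<in> \<A> \<and> y \<in> U}" if "y \<in> Y" for y
  proof
    assume "finite {U \<in> \<U>. f U \<in> \<A> \<and> y \<in> U}"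
    moreover have "{A \<in> \<A>. y \<in> A} \<subseteq> f ` {U \<in> \<U>. f U \<in> \<A> \<and> y \<in> U}"
      using assms(4) trace that by fastforce
    ultimately have "finite {A \<in> \<A>. y \<in> A}"
      using finite_subset by blast
    then show False
      using assms(2,5) that by (auto simp: B_Lambda_def large_cover_iff)
  qed
  then show ?thesis
    using assms(1) by (auto simp: B_Lambda_def large_cover_iff)
qed

definition BL_splittable :: "real set \<Rightarrow> real set set \<Rightarrow> bool" where
  "BL_splittable X \<U> \<longleftrightarrow> (\<exists>\<V> \<W>. \<V> \<union> \<W> = \<U> \<and> \<V> \<inter> \<W> = {} \<and>
      (\<exists>\<V>'\<subseteq>\<V>. \<V>' \<in> B_Lambda X) \<and> (\<exists>\<W>'\<subseteq>\<W>. \<W>' \<in> B_Lambda X))"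

lemma Split_BL_iff: "Split_BL X \<longleftrightarrow> (\<forall>\<U>\<in>B_Lambda X. BL_splittable X \<U>)"
  unfolding Split_BL_def BL_splittable_def ..

lemma BL_splittable_pullback:
  assumes "\<U> \<in> B_Lambda Y" and "Y \<subseteq> X" and "\<And>U. U \<in> \<U> \<Longrightarrow> f U \<inter> Y = U"
    and "BL_splittable X (f ` \<U>)"
  shows "BL_splittable Y \<U>"
proof -
  obtain \<V> \<W> \<V>' \<W>' where split: "\<V> \<union> \<W> = f ` \<U>" "\<V> \<inter> \<W> = {}"
    and "\<V>' \<subseteq> \<V>" "\<V>' \<in> B_Lambda X" and "\<W>' \<subseteq> \<W>" "\<W>' \<in> B_Lambda X"
    using assms(4) unfolding BL_splittable_def by blast
  let ?pull = "\<lambda>\<A>. {U \<in> \<U>. f U \<in> \<A>}"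
  have "\<V>' \<subseteq> f ` \<U>" and "\<W>' \<subseteq> f ` \<U>"
    using split(1) \<open>\<V>' \<subseteq> \<V>\<close> \<open>\<W>' \<subseteq> \<W>\<close> by blast+
  then have "?pull \<V>' \<in> B_Lambda Y" and "?pull \<W>' \<in> B_Lambda Y"
    using \<open>\<V>' \<in> B_Lambda X\<close> \<open>\<W>' \<in> B_Lambda X\<close> by (simp_all add: B_Lambda_pullback[OF assms(1-3)])
  moreover have "?pull \<V>' \<subseteq> ?pull \<V>" and "?pull \<W>' \<subseteq> ?pull \<W>"
    using \<open>\<V>' \<subseteq> \<V>\<close> \<open>\<W>' \<subseteq> \<W>\<close> by blast+
  moreover have "?pull \<V> \<union> ?pull \<W> = \<U>" and "?pull \<V> \<inter> ?pull \<W> = {}"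
    using split by blast+
  ultimately show ?thesis
    unfolding BL_splittable_def by meson
qed

theorem theorem7p4:
  fixes X Y :: "real set"
  assumes "infinite X" and "Split_BL X" and "Y \<subseteq> X" and "infinite Y"
  shows "Split_BL Y"
  unfolding Split_BL_iff
proof
  fix \<U> assume \<U>: "\<U> \<in> B_Lambda Y"
  have "Y \<noteq> {}"
    using assms(4) by auto
  then obtain f where trace: "\<And>U. U \<in> \<U> \<Longrightarrow> f U \<inter> Y = U" and "f ` \<U> \<in> B_Lambda X"
    using B_Lambda_extend[OF \<U> assms(3)] by blast
  then have "BL_splittable X (f ` \<U>)"
    using assms(2) by (simp add: Split_BL_iff)
  with trace show "BL_splittable Y \<U>"
    by (rule BL_splittable_pullback[OF \<U> assms(3)])
qed

end
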